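(* For all positive integers $k$, $n$ and $s$, $$\sum_{q\mid k}\bigl|c_q^{(s)}(n)\bigr|\le n\,2^{\omega(k)}.$$
   Context: For positive integers $a,b,s$, the generalized gcd $(a,b)_s$ is the largest $d^s$ ($d\in\mathbb{N}$) such that $d^s\mid a$ and $d^s\mid b$. The Cohen–Ramanujan sum is defined for positive integers $q,n,s$ by $$c_q^{(s)}(n)=\sum_{\substack{h=1\\ (h,q^s)_s=1}}^{q^s} e^{2\pi i n h/q^s}.$$ $\omega(k)$ denotes the number of distinct prime divisors of $k$; the sum is over the positive divisors $q$ of $k$. *)

theory Defs
  imports "HOL-Analysis.Analysis" "HOL-Computational_Algebra.Primes"
begin

definition gen_gcd :: "nat \<Rightarrow> nat \<Rightarrow> nat \<Rightarrow> nat" where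
  "gen_gcd s a b = Max {d ^ s | d. d \<ge> 1 \<and> d ^ s dvd a \<and> d ^ s dvd b}"

definition cohen_ramanujan :: "nat \<Rightarrow> nat \<Rightarrow> nat \<Rightarrow> complex" where
  "cohen_ramanujan s q n =
     (\<Sum>h \<in> {h \<in> {1..q ^ s}. gen_gcd s h (q ^ s) = 1}.
        exp (2 * of_real pi * \<i> * of_nat n * of_nat h / of_nat (q ^ s)))"

definition omega :: "nat \<Rightarrow> nat" where
  "omega k = card (prime_factors k)"

end

theory Submission
  imports Defs
begin

text \<open>
  Sieving the condition (h, q^s)_s = 1 by inclusion-exclusion over the primes dividing q writes
  c_q(n) as a signed sum of complete exponential sums \<Sum>_{h=1..L} e(nh/L), each of which is L
  if L divides n and 0 otherwise. Hence q \<mapsto> c_q(n) is multiplicative, and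
  c_{p^j}(n) = [p^{js} | n] p^{js} - [p^{(j-1)s} | n] p^{(j-1)s}. Along the powers of one prime the
  absolute values telescope: if t \<le> a is maximal with p^{ts} | n, then
  \<Sum>_{j \<le> a} |c_{p^j}(n)| \<le> 2 p^{ts}. Multiplying over the prime powers of k bounds the
  divisor sum by 2^\<omega>(k) d^s for some d | k with d^s | n, and d^s \<le> n.
\<close>

definition unity_root_sum :: "nat \<Rightarrow> nat \<Rightarrow> nat" where
  "unity_root_sum n L = (if L dvd n then L else 0)"

lemma sum_exp_eq_unity_root_sum:
  assumes "L > 0"
  shows "(\<Sum>j\<in>{1..L}. exp (2 * of_real pi * \<i> * of_nat n * of_nat j / of_nat L))
           = of_nat (unity_root_sum n L)"
proof -
  define w where "w = exp (2 * of_real pi * \<i> * of_nat n / of_nat L)"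
  have powers: "exp (2 * of_real pi * \<i> * of_nat n * of_nat j / of_nat L) = w ^ j" for j
    unfolding w_def exp_of_nat_mult [symmetric] by (simp add: field_simps)
  have "w ^ L = exp (2 * of_real pi * \<i>) ^ n"
    unfolding w_def exp_of_nat_mult [symmetric] using assms by (simp add: field_simps)
  then have w_pow_L: "w ^ L = 1"
    by simp
  have w_eq_1: "w = 1 \<longleftrightarrow> L dvd n"
  proof
    assume "w = 1"
    then obtain m :: int where "2 * pi * real n / real L = of_int (2 * m) * pi"
      unfolding w_def exp_eq_1 by auto
    then have "int n = int L * m"
      using assms by (simp add: field_simps) (metis of_int_eq_iff of_int_mult of_int_of_nat_eq)
    then show "L dvd n"
      by (metis dvd_triv_left int_dvd_int_iff)
  next
    assume "L dvd n"
    then obtain m where "n = L * m" ..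
    then have "w = exp (2 * of_real pi * \<i>) ^ m"
      unfolding w_def exp_of_nat_mult [symmetric] using assms by (simp add: field_simps)
    then show "w = 1"
      by simp
  qed
  show ?thesis
  proof (cases "L dvd n")
    case True
    then show ?thesis
      using w_eq_1 by (simp add: powers unity_root_sum_def)
  next
    case False
    then have "(\<Sum>j\<in>{1..L}. w ^ j) = (w ^ 1 - w ^ Suc L) / (1 - w)"
      using w_eq_1 assms by (subst sum_gp) auto
    then show ?thesis
      using False w_pow_L by (simp add: powers unity_root_sum_def)
  qed
qed

lemma unity_root_sum_mult:
  assumes "coprime L1 L2"
  shows "unity_root_sum n (L1 * L2) = unity_root_sum n L1 * unity_root_sum n L2"
  using assms by (auto simp: unity_root_sum_def intro: divides_mult dvd_mult_left dvd_mult_right)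

lemma sum_Pow_minus_one_power:
  assumes "finite S"
  shows "(\<Sum>T\<in>Pow S. (-1) ^ card T) = (if S = {} then 1 else (0::'a::ring_1))"
proof (cases "S = {}")
  case False
  have "card {T. T \<subseteq> S \<and> {} \<subseteq> T \<and> even (card T)}
      = card {T. T \<subseteq> S \<and> {} \<subseteq> T \<and> odd (card T)}"
    using assms False by (intro card_subsupersets_even_odd) auto
  then show ?thesis
    using assms False by (simp add: Pow_def sum_alternating_cancels)
qed simp

lemma sum_Pow_minus_one_power_indicator:
  assumes "finite P"
  shows "(\<Sum>T\<in>Pow P. (-1) ^ card T * (if \<forall>x\<in>T. Q x then 1 else 0))
           = (if \<forall>x\<in>P. \<not> Q x then 1 else (0::'a::ring_1))"
proof -
  have "(\<Sum>T\<in>Pow P. (-1) ^ card T * (if \<forall>x\<in>T. Q x then 1 else 0))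
      = (\<Sum>T\<in>{T \<in> Pow P. T \<subseteq> {x\<in>P. Q x}}. (-1::'a) ^ card T)"
    using assms by (subst sum.inter_filter) (auto intro!: sum.cong)
  also have "{T \<in> Pow P. T \<subseteq> {x\<in>P. Q x}} = Pow {x\<in>P. Q x}"
    by auto
  finally show ?thesis
    using assms by (simp add: sum_Pow_minus_one_power)
qed

lemma prod_prime_powers_dvd_iff:
  fixes h :: nat
  assumes "finite T" "\<forall>p\<in>T. prime p"
  shows "(\<Prod>p\<in>T. p ^ s) dvd h \<longleftrightarrow> (\<forall>p\<in>T. p ^ s dvd h)"
  using assms
proof (induction T rule: finite_induct)
  case (insert x F)
  have "coprime (x ^ s) (\<Prod>p\<in>F. p ^ s)"
    using insert by (intro prod_coprime_right coprime_power_left_iff [THEN iffD2]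
        coprime_power_right_iff [THEN iffD2]) (auto intro!: primes_coprime)
  with insert show ?case
    by (auto intro: divides_mult dvd_mult_left dvd_mult_right)
qed simp

lemma gen_gcd_pow_eq_1_iff:
  assumes "s > 0" "q > 0"
  shows "gen_gcd s h (q ^ s) = 1 \<longleftrightarrow> (\<forall>p\<in>prime_factors q. \<not> p ^ s dvd h)"
proof -
  define D where "D = {d ^ s | d. d \<ge> 1 \<and> d ^ s dvd h \<and> d ^ s dvd q ^ s}"
  have "finite D"
    by (rule finite_subset [of _ "{..q ^ s}"]) (auto simp: D_def assms dvd_imp_le)
  moreover have "1 \<in> D"
    unfolding D_def by force
  ultimately have "Max D = 1 \<longleftrightarrow> (\<forall>x\<in>D. x \<le> 1)"
    by (metis Max_ge Max_le_iff empty_iff le_antisym)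
  also have "\<dots> \<longleftrightarrow> (\<forall>d. d ^ s dvd h \<and> d dvd q \<longrightarrow> d = 1)"
  proof -
    have "d ^ s \<le> 1 \<longleftrightarrow> d = 1" if "d \<ge> 1" for d :: nat
      using that assms one_less_power [of d s] by (cases "d = 1") auto
    moreover have "d \<ge> 1" if "d dvd q" for d
      using that assms by (cases "d = 0") auto
    ultimately show ?thesis
      using assms by (auto simp: D_def)
  qed
  also have "\<dots> \<longleftrightarrow> (\<forall>p\<in>prime_factors q. \<not> p ^ s dvd h)"
  proof
    assume "\<forall>d. d ^ s dvd h \<and> d dvd q \<longrightarrow> d = 1"
    then show "\<forall>p\<in>prime_factors q. \<not> p ^ s dvd h"
      by (metis in_prime_factors_iff not_prime_1)
  next
    assume no_prime: "\<forall>p\<in>prime_factors q. \<not> p ^ s dvd h"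
    show "\<forall>d. d ^ s dvd h \<and> d dvd q \<longrightarrow> d = 1"
    proof (intro allI impI, rule ccontr)
      fix d assume d: "d ^ s dvd h \<and> d dvd q" "d \<noteq> 1"
      then obtain p where "prime p" "p dvd d"
        using prime_factor_nat by blast
      with d assms have "p \<in> prime_factors q" "p ^ s dvd h"
        by (auto simp: in_prime_factors_iff intro: dvd_trans dvd_power_same)
      with no_prime show False
        by blast
    qed
  qed
  finally show ?thesis
    unfolding gen_gcd_def D_def .
qed

lemma sum_exp_over_multiples:
  assumes "M > 0" "M dvd N"
  shows "(\<Sum>h | h \<in> {1..N} \<and> M dvd h. exp (2 * of_real pi * \<i> * of_nat n * of_nat h / of_nat N))
           = of_nat (unity_root_sum n (N div M))"
proof (cases "N = 0")
  case False
  define L where "L = N div M"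
  have N: "N = M * L" "L > 0"
    using assms False by (auto simp: L_def)
  have image: "{h. h \<in> {1..N} \<and> M dvd h} = (\<lambda>j. M * j) ` {1..L}"
  proof safe
    fix h assume "h \<in> {1..N}" "M dvd h"
    then obtain j where "h = M * j" "j \<in> {1..L}"
      using N by (auto elim!: dvdE)
    then show "h \<in> (\<lambda>j. M * j) ` {1..L}"
      by blast
  qed (use N(1) assms(1) in auto)
  have "inj_on (\<lambda>j. M * j) {1..L}"
    using assms by (auto simp: inj_on_def)
  then have "(\<Sum>h | h \<in> {1..N} \<and> M dvd h. exp (2 * of_real pi * \<i> * of_nat n * of_nat h / of_nat N))
      = (\<Sum>j\<in>{1..L}. exp (2 * of_real pi * \<i> * of_nat n * of_nat (M * j) / of_nat N))"
    unfolding image by (simp add: sum.reindex)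
  also have "\<dots> = (\<Sum>j\<in>{1..L}. exp (2 * of_real pi * \<i> * of_nat n * of_nat j / of_nat L))"
    using assms N by (intro sum.cong refl arg_cong [where f = exp]) (simp add: field_simps)
  finally show ?thesis
    using sum_exp_eq_unity_root_sum [OF N(2)] by (simp add: L_def)
qed (simp add: unity_root_sum_def)

lemma prod_prime_factors_powers_dvd:
  fixes q :: nat
  assumes "T \<subseteq> prime_factors q"
  shows "(\<Prod>p\<in>T. p ^ s) dvd q ^ s"
proof -
  have "finite T"
    using assms finite_subset by blast
  with assms have "(\<Prod>p\<in>T. p ^ 1) dvd q"
    by (subst prod_prime_powers_dvd_iff) (auto simp: in_prime_factors_iff)
  then show ?thesis
    by (simp add: dvd_power_same flip: prod_power_distrib)
qed

lemma cohen_ramanujan_inclusion_exclusion: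
  assumes "q > 0" "s > 0"
  shows "cohen_ramanujan s q n = (\<Sum>T\<in>Pow (prime_factors q).
           (-1) ^ card T * of_nat (unity_root_sum n (q ^ s div (\<Prod>p\<in>T. p ^ s))))"
proof -
  define E where "E h = exp (2 * of_real pi * \<i> * of_nat n * of_nat h / of_nat (q ^ s))" for h
  define M where "M T = (\<Prod>p\<in>T. p ^ s :: nat)" for T
  let ?ind = "\<lambda>b. if b then 1 else 0 :: complex"
  have "cohen_ramanujan s q n = (\<Sum>h\<in>{1..q ^ s}. if gen_gcd s h (q ^ s) = 1 then E h else 0)"
    unfolding cohen_ramanujan_def E_def by (rule sum.inter_filter) simp
  also have "\<dots> = (\<Sum>h\<in>{1..q ^ s}. ?ind (\<forall>p\<in>prime_factors q. \<not> p ^ s dvd h) * E h)"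
    by (intro sum.cong refl)
      (simp only: gen_gcd_pow_eq_1_iff [OF assms(2,1)] if_distrib [of "\<lambda>x. x * _"] mult_1 mult_zero_left)
  also have "\<dots> = (\<Sum>h\<in>{1..q ^ s}. \<Sum>T\<in>Pow (prime_factors q).
                      (-1) ^ card T * (?ind (M T dvd h) * E h))"
  proof (intro sum.cong refl)
    fix h
    have "?ind (\<forall>p\<in>prime_factors q. \<not> p ^ s dvd h)
        = (\<Sum>T\<in>Pow (prime_factors q). (-1) ^ card T * ?ind (\<forall>p\<in>T. p ^ s dvd h))"
      by (rule sum_Pow_minus_one_power_indicator [symmetric]) simp
    also have "\<dots> = (\<Sum>T\<in>Pow (prime_factors q). (-1) ^ card T * ?ind (M T dvd h))"
      unfolding M_def
    proof (intro sum.cong refl)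
      fix T assume "T \<in> Pow (prime_factors q)"
      then have "finite T" "\<forall>p\<in>T. prime p"
        by (auto intro: finite_subset)
      then show "(-1) ^ card T * ?ind (\<forall>p\<in>T. p ^ s dvd h)
          = (-1) ^ card T * ?ind ((\<Prod>p\<in>T. p ^ s) dvd h)"
        by (simp add: prod_prime_powers_dvd_iff)
    qed
    finally show "?ind (\<forall>p\<in>prime_factors q. \<not> p ^ s dvd h) * E h
        = (\<Sum>T\<in>Pow (prime_factors q). (-1) ^ card T * (?ind (M T dvd h) * E h))"
      by (simp add: sum_distrib_right mult.assoc)
  qed
  also have "\<dots> = (\<Sum>T\<in>Pow (prime_factors q).
                      (-1) ^ card T * (\<Sum>h\<in>{1..q ^ s}. if M T dvd h then E h else 0))"
    by (subst sum.swap) (simp add: sum_distrib_left if_distrib [of "\<lambda>x. x * _"] cong: if_cong)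
  also have "\<dots> = (\<Sum>T\<in>Pow (prime_factors q).
                      (-1) ^ card T * of_nat (unity_root_sum n (q ^ s div M T)))"
  proof (intro sum.cong refl arg_cong [where f = "\<lambda>x. _ * x"])
    fix T assume "T \<in> Pow (prime_factors q)"
    then have "M T > 0" "M T dvd q ^ s"
      unfolding M_def by (auto intro!: prod_pos prod_prime_factors_powers_dvd simp: prime_factors_gt_0_nat)
    then show "(\<Sum>h\<in>{1..q ^ s}. if M T dvd h then E h else 0) = of_nat (unity_root_sum n (q ^ s div M T))"
      unfolding E_def by (simp flip: sum.inter_filter sum_exp_over_multiples)
  qed
  finally show ?thesis
    unfolding M_def .
qed

lemma bij_betw_Un_Pow:
  assumes "A \<inter> B = {}"
  shows "bij_betw (\<lambda>(X, Y). X \<union> Y) (Pow A \<times> Pow B) (Pow (A \<union> B))"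
  by (rule bij_betw_byWitness [where f' = "\<lambda>Z. (Z \<inter> A, Z \<inter> B)"]) (use assms in auto)

lemma cohen_ramanujan_mult:
  assumes "coprime q1 q2" "q1 > 0" "q2 > 0" "s > 0"
  shows "cohen_ramanujan s (q1 * q2) n = cohen_ramanujan s q1 n * cohen_ramanujan s q2 n"
proof -
  define f :: "nat \<Rightarrow> nat set \<Rightarrow> complex"
    where "f q T = (-1) ^ card T * of_nat (unity_root_sum n (q ^ s div (\<Prod>p\<in>T. p ^ s)))"
    for q T
  have disjoint: "prime_factors q1 \<inter> prime_factors q2 = {}"
    using assms(1) by (auto simp: in_prime_factors_iff dest: coprime_common_divisor_nat)
  have f_mult: "f (q1 * q2) (T1 \<union> T2) = f q1 T1 * f q2 T2"
    if T: "T1 \<subseteq> prime_factors q1" "T2 \<subseteq> prime_factors q2" for T1 T2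
  proof -
    define M1 where "M1 = (\<Prod>p\<in>T1. p ^ s)"
    define M2 where "M2 = (\<Prod>p\<in>T2. p ^ s)"
    have "finite T1" "finite T2" "T1 \<inter> T2 = {}"
      using T disjoint by (auto intro: finite_subset)
    then have card_Un: "card (T1 \<union> T2) = card T1 + card T2"
      and prod_Un: "(\<Prod>p\<in>T1 \<union> T2. p ^ s) = M1 * M2"
      by (simp_all add: M1_def M2_def card_Un_disjoint prod.union_disjoint)
    have M: "M1 dvd q1 ^ s" "M2 dvd q2 ^ s"
      using T by (simp_all add: M1_def M2_def prod_prime_factors_powers_dvd)
    then have div: "(q1 * q2) ^ s div (M1 * M2) = (q1 ^ s div M1) * (q2 ^ s div M2)"
      by (simp add: div_mult_div_if_dvd power_mult_distrib)
    have "q1 ^ s div M1 dvd q1 ^ s" "q2 ^ s div M2 dvd q2 ^ s"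
      using M by (metis dvd_mult_div_cancel dvd_triv_right)+
    then have "coprime (q1 ^ s div M1) (q2 ^ s div M2)"
      using assms(1) by (simp add: coprime_divisors)
    then show ?thesis
      unfolding f_def M1_def [symmetric] M2_def [symmetric] card_Un prod_Un div
      by (simp add: unity_root_sum_mult power_add)
  qed
  have "cohen_ramanujan s (q1 * q2) n
      = (\<Sum>T\<in>Pow (prime_factors q1 \<union> prime_factors q2). f (q1 * q2) T)"
    using assms by (simp add: cohen_ramanujan_inclusion_exclusion prime_factors_product f_def)
  also have "\<dots> = (\<Sum>(T1, T2)\<in>Pow (prime_factors q1) \<times> Pow (prime_factors q2).
                      f (q1 * q2) (T1 \<union> T2))"
    using sum.reindex_bij_betw [OF bij_betw_Un_Pow [OF disjoint], of "f (q1 * q2)"] by (simp add: split_def)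
  also have "\<dots> = (\<Sum>T1\<in>Pow (prime_factors q1). f q1 T1)
                    * (\<Sum>T2\<in>Pow (prime_factors q2). f q2 T2)"
    by (simp add: sum_product sum.cartesian_product case_prod_beta) (intro sum.cong refl; auto simp: f_mult)
  also have "\<dots> = cohen_ramanujan s q1 n * cohen_ramanujan s q2 n"
    using assms by (simp add: cohen_ramanujan_inclusion_exclusion f_def)
  finally show ?thesis .
qed

lemma cohen_ramanujan_1:
  assumes "s > 0"
  shows "cohen_ramanujan s 1 n = 1"
  using assms by (simp add: cohen_ramanujan_inclusion_exclusion unity_root_sum_def)

lemma cohen_ramanujan_prime_power:
  assumes "prime p" "j > 0" "s > 0"
  shows "cohen_ramanujan s (p ^ j) n
           = of_nat (unity_root_sum n (p ^ (j * s))) - of_nat (unity_root_sum n (p ^ ((j - 1) * s)))"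
proof -
  have "prime_factors (p ^ j) = {p}"
    using assms by (simp add: prime_factorization_prime_power)
  moreover have "Pow {p} = {{}, {p}}"
    by auto
  moreover have "(p ^ j) ^ s div p ^ s = p ^ ((j - 1) * s)"
    using assms by (cases j) (simp_all add: prime_gt_0_nat power_mult_distrib power_mult [symmetric] mult.commute)
  ultimately show ?thesis
    using assms by (simp add: cohen_ramanujan_inclusion_exclusion prime_gt_0_nat flip: power_mult)
qed

lemma norm_cohen_ramanujan_prime_power:
  assumes "prime p" "j > 0" "s > 0"
  shows "norm (cohen_ramanujan s (p ^ j) n) =
           (if p ^ (j * s) dvd n then real (p ^ (j * s)) - real (p ^ ((j - 1) * s))
            else if p ^ ((j - 1) * s) dvd n then real (p ^ ((j - 1) * s)) else 0)"
proof -
  have "p ^ ((j - 1) * s) dvd p ^ (j * s)"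
    by (simp add: le_imp_power_dvd)
  moreover have "norm (of_nat a - of_nat b :: complex) = \<bar>real a - real b\<bar>" for a b
    by (metis norm_of_real of_real_diff of_real_of_nat_eq)
  ultimately show ?thesis
    using assms by (auto simp: cohen_ramanujan_prime_power unity_root_sum_def prime_gt_0_nat dvd_imp_le
        simp del: of_nat_power intro: dvd_trans)
qed

text \<open>The exact value in the case p^{as} | n is the invariant that carries the induction.\<close>

lemma sum_norm_cohen_ramanujan_prime_powers:
  assumes "prime p" "s > 0"
  shows "\<exists>t\<le>a. p ^ (t * s) dvd n
           \<and> (\<Sum>i\<le>a. norm (cohen_ramanujan s (p ^ i) n)) \<le> 2 * p ^ (t * s)
           \<and> (p ^ (a * s) dvd n \<longrightarrow> (\<Sum>i\<le>a. norm (cohen_ramanujan s (p ^ i) n)) = p ^ (a * s))"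
proof (induction a)
  case 0
  then show ?case
    using cohen_ramanujan_1 [OF assms(2), of n] by simp
next
  case (Suc a)
  define R where "R = (\<Sum>i\<le>a. norm (cohen_ramanujan s (p ^ i) n))"
  define T where "T = norm (cohen_ramanujan s (p ^ Suc a) n)"
  obtain t where t: "t \<le> a" "p ^ (t * s) dvd n" "R \<le> 2 * p ^ (t * s)"
    and exact: "p ^ (a * s) dvd n \<Longrightarrow> R = p ^ (a * s)"
    using Suc.IH unfolding R_def by blast
  have T: "T = (if p ^ (Suc a * s) dvd n then real (p ^ (Suc a * s)) - real (p ^ (a * s))
                else if p ^ (a * s) dvd n then real (p ^ (a * s)) else 0)"
    unfolding T_def using norm_cohen_ramanujan_prime_power [OF assms(1) _ assms(2), of "Suc a"] by simp
  have sum_Suc: "(\<Sum>i\<le>Suc a. norm (cohen_ramanujan s (p ^ i) n)) = R + T"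
    by (simp add: R_def T_def)
  have "p ^ (a * s) dvd p ^ (Suc a * s)"
    by (simp add: le_imp_power_dvd)
  then consider
      "p ^ (Suc a * s) dvd n"
    | "\<not> p ^ (Suc a * s) dvd n" "p ^ (a * s) dvd n"
    | "\<not> p ^ (Suc a * s) dvd n" "\<not> p ^ (a * s) dvd n"
    by blast
  then show ?case
  proof cases
    case 1
    with \<open>p ^ (a * s) dvd p ^ (Suc a * s)\<close> have "p ^ (a * s) dvd n"
      by (rule dvd_trans)
    with 1 show ?thesis
      using exact T sum_Suc by (intro exI [of _ "Suc a"]) auto
  next
    case 2
    then show ?thesis
      using exact T sum_Suc by (intro exI [of _ a]) auto
  next
    case 3
    then show ?thesis
      using t T sum_Suc by (intro exI [of _ t]) auto
  qed
qed

lemma sum_divisors_coprime_mult: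
  fixes f :: "nat \<Rightarrow> 'a::comm_monoid_add"
  assumes "coprime a b"
  shows "(\<Sum>q | q dvd a * b. f q) = (\<Sum>x | x dvd a. \<Sum>y | y dvd b. f (x * y))"
proof -
  have gcd_eq: "gcd (x * y) a = x" "gcd (x * y) b = y" if "x dvd a" "y dvd b" for x y
  proof -
    have "coprime a y" "coprime b x"
      using coprime_divisors [OF dvd_refl that(2) assms] coprime_divisors [OF that(1) dvd_refl assms]
      by (simp_all add: coprime_commute)
    then show "gcd (x * y) a = x" "gcd (x * y) b = y"
      using that by (simp_all add: gcd_mult_left_right_cancel gcd_mult_left_left_cancel gcd_nat.absorb1)
  qed
  have "inj_on (\<lambda>(x, y). x * y) ({x. x dvd a} \<times> {y. y dvd b})"
    unfolding inj_on_def by clarsimp (metis gcd_eq)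
  moreover have "(\<lambda>(x, y). x * y) ` ({x. x dvd a} \<times> {y. y dvd b}) = {q. q dvd a * b}"
    by (auto intro: mult_dvd_mono dest!: division_decomp)
  ultimately have "(\<Sum>q | q dvd a * b. f q) = (\<Sum>(x, y)\<in>{x. x dvd a} \<times> {y. y dvd b}. f (x * y))"
    by (simp add: bij_betw_def split_def flip: sum.reindex_bij_betw)
  then show ?thesis
    unfolding sum.cartesian_product .
qed

definition cohen_ramanujan_norm_sum :: "nat \<Rightarrow> nat \<Rightarrow> nat \<Rightarrow> real" where
  "cohen_ramanujan_norm_sum s n k = (\<Sum>q | q dvd k. norm (cohen_ramanujan s q n))"

lemma cohen_ramanujan_norm_sum_mult:
  assumes "coprime a b" "a > 0" "b > 0" "s > 0"
  shows "cohen_ramanujan_norm_sum s n (a * b) = cohen_ramanujan_norm_sum s n a * cohen_ramanujan_norm_sum s n b"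
proof -
  have "norm (cohen_ramanujan s (x * y) n) = norm (cohen_ramanujan s x n) * norm (cohen_ramanujan s y n)"
    if "x dvd a" "y dvd b" for x y
  proof -
    have "coprime x y" "x > 0" "y > 0"
      using that assms coprime_divisors by (auto intro: dvd_pos_nat)
    then show ?thesis
      using assms(4) by (simp add: cohen_ramanujan_mult norm_mult)
  qed
  then show ?thesis
    unfolding cohen_ramanujan_norm_sum_def sum_divisors_coprime_mult [OF assms(1)]
    by (simp add: sum_product)
qed

lemma cohen_ramanujan_norm_sum_prime_power:
  assumes "prime p"
  shows "cohen_ramanujan_norm_sum s n (p ^ a) = (\<Sum>i\<le>a. norm (cohen_ramanujan s (p ^ i) n))"
proof -
  have "{q. q dvd p ^ a} = (\<lambda>i. p ^ i) ` {..a}"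
    using divides_primepow_nat [OF assms] by auto
  moreover have "inj_on (\<lambda>i. p ^ i) {..a}"
    using prime_gt_1_nat [OF assms] by (auto simp: inj_on_def)
  ultimately show ?thesis
    unfolding cohen_ramanujan_norm_sum_def by (simp add: sum.reindex)
qed

lemma omega_prime_power_mult:
  assumes "prime p" "a > 0" "m > 0" "\<not> p dvd m"
  shows "omega (p ^ a * m) = Suc (omega m)"
proof -
  have "prime_factors (p ^ a * m) = insert p (prime_factors m)"
    using assms by (simp add: prime_factors_product prime_factorization_prime_power prime_gt_0_nat)
  moreover have "p \<notin> prime_factors m"
    using assms(4) by (auto simp: in_prime_factors_iff)
  ultimately show ?thesis
    by (simp add: omega_def)
qed

lemma prime_power_factor:
  fixes k p :: nat
  assumes "prime p" "p dvd k" "k > 0"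
  obtains a m where "k = p ^ a * m" "a > 0" "m > 0" "\<not> p dvd m"
proof -
  define a where "a = multiplicity p k"
  obtain m where "k = p ^ a * m" "\<not> p dvd m"
    using multiplicity_decompose' [of k p] assms unfolding a_def by (metis neq0_conv not_prime_unit)
  moreover have "a > 0"
    using assms unfolding a_def by (metis multiplicity_gt_zero_iff neq0_conv not_prime_unit)
  ultimately show ?thesis
    using that assms(3) by simp
qed

text \<open>Keeping d | k in the statement makes d coprime to the prime split off in the induction step.\<close>

lemma cohen_ramanujan_norm_sum_bound:
  assumes "k > 0" "s > 0"
  shows "\<exists>d. d dvd k \<and> d ^ s dvd n \<and> cohen_ramanujan_norm_sum s n k \<le> 2 ^ omega k * d ^ s"
  using assms(1)
proof (induction k rule: less_induct)
  case (less k)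
  show ?case
  proof (cases "k = 1")
    case True
    then show ?thesis
      using cohen_ramanujan_1 [OF assms(2), of n]
      by (intro exI [of _ 1]) (simp add: cohen_ramanujan_norm_sum_def omega_def)
  next
    case False
    then obtain p where p: "prime p" "p dvd k"
      using prime_factor_nat by blast
    then obtain a m where k: "k = p ^ a * m" and "a > 0" "m > 0" and p_m: "\<not> p dvd m"
      using less.prems by (rule prime_power_factor)
    then have "m < k"
      using one_less_power [OF prime_gt_1_nat [OF p(1)] \<open>a > 0\<close>] by simp
    have coprime_p_m: "coprime p m"
      using p p_m by (simp add: prime_imp_coprime)
    obtain d where d: "d dvd m" "d ^ s dvd n" "cohen_ramanujan_norm_sum s n m \<le> 2 ^ omega m * d ^ s"
      using less.IH [OF \<open>m < k\<close> \<open>m > 0\<close>] by blast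
    obtain t where t: "t \<le> a" "p ^ (t * s) dvd n"
      "cohen_ramanujan_norm_sum s n (p ^ a) \<le> 2 * p ^ (t * s)"
      using sum_norm_cohen_ramanujan_prime_powers [OF p(1) assms(2)]
      by (auto simp: cohen_ramanujan_norm_sum_prime_power [OF p(1)])
    have power_mult_eq: "(p ^ t * d) ^ s = p ^ (t * s) * d ^ s"
      by (simp add: power_mult_distrib power_mult)
    show ?thesis
    proof (intro exI conjI)
      show "p ^ t * d dvd k"
        using k t(1) d(1) by (auto intro: mult_dvd_mono le_imp_power_dvd)
      have "coprime p d"
        using coprime_divisors [OF dvd_refl d(1) coprime_p_m] .
      then show "(p ^ t * d) ^ s dvd n"
        unfolding power_mult_eq using t(2) d(2) by (simp add: divides_mult)
      have "cohen_ramanujan_norm_sum s n k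
          = cohen_ramanujan_norm_sum s n (p ^ a) * cohen_ramanujan_norm_sum s n m"
        using k coprime_p_m \<open>m > 0\<close> p(1) assms(2)
        by (simp add: cohen_ramanujan_norm_sum_mult prime_gt_0_nat)
      also have "\<dots> \<le> real (2 * p ^ (t * s)) * real (2 ^ omega m * d ^ s)"
        using t(3) d(3) by (intro mult_mono) (auto simp: cohen_ramanujan_norm_sum_def intro: sum_nonneg)
      also have "\<dots> = real (2 ^ omega k * (p ^ t * d) ^ s)"
        unfolding of_nat_mult [symmetric] power_mult_eq
        using k p(1) \<open>a > 0\<close> \<open>m > 0\<close> p_m by (simp add: omega_prime_power_mult)
      finally show "cohen_ramanujan_norm_sum s n k \<le> 2 ^ omega k * (p ^ t * d) ^ s" .
    qed
  qed
qed

theorem theorem1: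
  fixes k n s :: nat
  assumes "k > 0" and "n > 0" and "s > 0"
  shows "(\<Sum>q | q dvd k. norm (cohen_ramanujan s q n)) \<le> real n * 2 ^ omega k"
proof -
  obtain d where "d ^ s dvd n" and bound: "cohen_ramanujan_norm_sum s n k \<le> 2 ^ omega k * d ^ s"
    using cohen_ramanujan_norm_sum_bound [OF assms(1,3)] by blast
  have "real (d ^ s) \<le> real n"
    using \<open>d ^ s dvd n\<close> assms(2) by (simp add: dvd_imp_le del: of_nat_power)
  have "cohen_ramanujan_norm_sum s n k \<le> 2 ^ omega k * real (d ^ s)"
    using bound by simp
  also have "\<dots> \<le> 2 ^ omega k * real n"
    using \<open>real (d ^ s) \<le> real n\<close> by (rule mult_left_mono) simp
  finally show ?thesis
    unfolding cohen_ramanujan_norm_sum_def by (simp only: mult.commute)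
qed

end
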